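(* Let $(\mathcal C,\otimes,\mathbb I)$ be a monoidal category with pushouts and $(H,\Delta,\varepsilon)$ a coalgebra in $\mathcal C$. Let $(X,X\bullet H,\pi_X,\rho_X)$ be a geometric partial $H$-comodule, and consider the parallel comodule morphisms $\rho_X\otimes H,\ (\pi_X\otimes H)\circ(X\otimes\Delta):(X\otimes H,X\otimes\Delta)\to((X\bullet H)\otimes H,(X\bullet H)\otimes\Delta)$. Let $(Y,\delta)$ be a global $H$-comodule. Then the maps $$g\mapsto (g\otimes H)\circ\delta,\qquad f\mapsto (X\otimes\varepsilon)\circ f$$ are mutually inverse bijections between $\mathrm{Hom}_{\mathsf{PCom}^H}(\mathcal I(Y),X)$ and the set of comodule morphisms $f\in\mathrm{Hom}_{\mathsf{Com}^H}(Y,X\otimes H)$ satisfying $(\rho_X\otimes H)\circ f=(\pi_X\otimes H)\circ(X\otimes\Delta)\circ f$. This correspondence is natural in both $Y$ and $X$.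
   Context: $\mathcal C$ is treated as strict monoidal; the identity of an object $X$ is also written $X$. $\mathsf{Com}^H$ is the category of right $H$-comodules $(Y,\delta)$. A partial comodule datum is $(X,X\bullet H,\pi_X,\rho_X)$ with $\rho_X:X\to X\bullet H$ and $\pi_X:X\otimes H\to X\bullet H$ an epimorphism. For such a datum let: $(X\bullet H)\bullet H$ be the pushout of $\pi_X$ and $\rho_X\otimes H$, with coprojections $\rho_X\bullet H$ and $\pi_{X\bullet H}$; $X\bullet(H\otimes H)$ the pushout of $\pi_X$ and $X\otimes\Delta$, with coprojections $X\bullet\Delta$ and $\pi_{X,\Delta}:X\otimes H\otimes H\to X\bullet(H\otimes H)$; $X\bullet(H\bullet H)$ the pushout of $\pi_{X,\Delta}$ and $\pi_X\otimes H$, with coprojections $\pi'_X$ and $\pi'_{X,\Delta}$. A geometric partial $H$-comodule is a datum such that (GP1) there is $X\bullet\varepsilon:X\bullet H\to X$ with $(X\bullet\varepsilon)\circ\rho_X=\mathrm{id}_X$ and $(X\bullet\varepsilon)\circ\pi_X=X\otimes\varepsilon$; (GP2) there is an isomorphism $\theta:X\bullet(H\bullet H)\to(X\bullet H)\bullet H$ with $\theta\circ\pi'_{X,\Delta}=\pi_{X\bullet H}$ and $(\rho_X\bullet H)\circ\rho_X=\theta\circ\pi'_X\circ(X\bullet\Delta)\circ\rho_X$. Morphisms $X\to X'$ are pairs $(f,f\bullet H)$ with $\rho_{X'}\circ f=(f\bullet H)\circ\rho_X$ and $\pi_{X'}\circ(f\otimes H)=(f\bullet H)\circ\pi_X$ (determined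 by $f$); category $\mathsf{PCom}^H$. A global comodule $(Y,\delta)$ gives $\mathcal I(Y)=(Y,Y\otimes H,\mathrm{id},\delta)$; a morphism $\mathcal I(Y)\to X$ is a morphism $g:Y\to X$ in $\mathcal C$ with $\pi_X\circ(g\otimes H)\circ\delta=\rho_X\circ g$. *)

theory Defs
  imports Main
begin

record ('o,'m) smcat =
  Obj  :: "'o set"
  Arr  :: "'m set"
  Dom  :: "'m \<Rightarrow> 'o"
  Cod  :: "'m \<Rightarrow> 'o"
  Idm  :: "'o \<Rightarrow> 'm"
  Cmp  :: "'m \<Rightarrow> 'm \<Rightarrow> 'm"   (* Cmp C g f = g \<circ> f *)
  TnsO :: "'o \<Rightarrow> 'o \<Rightarrow> 'o"
  TnsM :: "'m \<Rightarrow> 'm \<Rightarrow> 'm"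
  Unt  :: "'o"

definition hom :: "('o,'m,'x) smcat_scheme \<Rightarrow> 'o \<Rightarrow> 'o \<Rightarrow> 'm set" where
  "hom C A B = {f \<in> Arr C. Dom C f = A \<and> Cod C f = B}"

definition category :: "('o,'m,'x) smcat_scheme \<Rightarrow> bool" where
  "category C \<longleftrightarrow>
     (\<forall>f\<in>Arr C. Dom C f \<in> Obj C \<and> Cod C f \<in> Obj C) \<and>
     (\<forall>A\<in>Obj C. Idm C A \<in> hom C A A) \<and>
     (\<forall>f\<in>Arr C. \<forall>g\<in>Arr C. Cod C f = Dom C g \<longrightarrow> Cmp C g f \<in> hom C (Dom C f) (Cod C g)) \<and>
     (\<forall>f\<in>Arr C. Cmp C f (Idm C (Dom C f)) = f \<and> Cmp C (Idm C (Cod C f)) f = f) \<and>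
     (\<forall>f\<in>Arr C. \<forall>g\<in>Arr C. \<forall>h\<in>Arr C. Cod C f = Dom C g \<longrightarrow> Cod C g = Dom C h \<longrightarrow>
        Cmp C h (Cmp C g f) = Cmp C (Cmp C h g) f)"

definition strict_monoidal_category :: "('o,'m,'x) smcat_scheme \<Rightarrow> bool" where
  "strict_monoidal_category C \<longleftrightarrow> category C \<and>
     Unt C \<in> Obj C \<and>
     (\<forall>A\<in>Obj C. \<forall>B\<in>Obj C. TnsO C A B \<in> Obj C) \<and>
     (\<forall>f\<in>Arr C. \<forall>g\<in>Arr C.
        TnsM C f g \<in> hom C (TnsO C (Dom C f) (Dom C g)) (TnsO C (Cod C f) (Cod C g))) \<and>
     (\<forall>A\<in>Obj C. \<forall>B\<in>Obj C. TnsM C (Idm C A) (Idm C B) = Idm C (TnsO C A B)) \<and>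
     (\<forall>f\<in>Arr C. \<forall>f'\<in>Arr C. \<forall>g\<in>Arr C. \<forall>g'\<in>Arr C.
        Cod C f = Dom C f' \<longrightarrow> Cod C g = Dom C g' \<longrightarrow>
        TnsM C (Cmp C f' f) (Cmp C g' g) = Cmp C (TnsM C f' g') (TnsM C f g)) \<and>
     (\<forall>A\<in>Obj C. \<forall>B\<in>Obj C. \<forall>D\<in>Obj C. TnsO C (TnsO C A B) D = TnsO C A (TnsO C B D)) \<and>
     (\<forall>f\<in>Arr C. \<forall>g\<in>Arr C. \<forall>h\<in>Arr C. TnsM C (TnsM C f g) h = TnsM C f (TnsM C g h)) \<and>
     (\<forall>A\<in>Obj C. TnsO C (Unt C) A = A \<and> TnsO C A (Unt C) = A) \<and>
     (\<forall>f\<in>Arr C. TnsM C (Idm C (Unt C)) f = f \<and> TnsM C f (Idm C (Unt C)) = f)"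

definition is_iso :: "('o,'m,'x) smcat_scheme \<Rightarrow> 'm \<Rightarrow> bool" where
  "is_iso C f \<longleftrightarrow> f \<in> Arr C \<and> (\<exists>g \<in> hom C (Cod C f) (Dom C f).
      Cmp C g f = Idm C (Dom C f) \<and> Cmp C f g = Idm C (Cod C f))"

definition is_epi :: "('o,'m,'x) smcat_scheme \<Rightarrow> 'm \<Rightarrow> bool" where
  "is_epi C e \<longleftrightarrow> e \<in> Arr C \<and> (\<forall>u\<in>Arr C. \<forall>v\<in>Arr C.
      Dom C u = Cod C e \<longrightarrow> Dom C v = Cod C e \<longrightarrow> Cmp C u e = Cmp C v e \<longrightarrow> u = v)"

definition is_pushout :: "('o,'m,'x) smcat_scheme \<Rightarrow> 'm \<Rightarrow> 'm \<Rightarrow> 'o \<Rightarrow> 'm \<Rightarrow> 'm \<Rightarrow> bool" where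
  "is_pushout C f g P p q \<longleftrightarrow>
     f \<in> Arr C \<and> g \<in> Arr C \<and> Dom C f = Dom C g \<and> P \<in> Obj C \<and>
     p \<in> hom C (Cod C f) P \<and> q \<in> hom C (Cod C g) P \<and> Cmp C p f = Cmp C q g \<and>
     (\<forall>Z\<in>Obj C. \<forall>u \<in> hom C (Cod C f) Z. \<forall>v \<in> hom C (Cod C g) Z.
        Cmp C u f = Cmp C v g \<longrightarrow>
        (\<exists>!h. h \<in> hom C P Z \<and> Cmp C h p = u \<and> Cmp C h q = v))"

definition has_pushouts :: "('o,'m,'x) smcat_scheme \<Rightarrow> bool" where
  "has_pushouts C \<longleftrightarrow> (\<forall>f\<in>Arr C. \<forall>g\<in>Arr C. Dom C f = Dom C g \<longrightarrow>
      (\<exists>P p q. is_pushout C f g P p q))"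

definition coalgebra :: "('o,'m,'x) smcat_scheme \<Rightarrow> 'o \<Rightarrow> 'm \<Rightarrow> 'm \<Rightarrow> bool" where
  "coalgebra C H \<Delta> \<epsilon> \<longleftrightarrow> H \<in> Obj C \<and>
     \<Delta> \<in> hom C H (TnsO C H H) \<and> \<epsilon> \<in> hom C H (Unt C) \<and>
     Cmp C (TnsM C \<Delta> (Idm C H)) \<Delta> = Cmp C (TnsM C (Idm C H) \<Delta>) \<Delta> \<and>
     Cmp C (TnsM C \<epsilon> (Idm C H)) \<Delta> = Idm C H \<and>
     Cmp C (TnsM C (Idm C H) \<epsilon>) \<Delta> = Idm C H"

definition comodule :: "('o,'m,'x) smcat_scheme \<Rightarrow> 'o \<Rightarrow> 'm \<Rightarrow> 'm \<Rightarrow> 'o \<Rightarrow> 'm \<Rightarrow> bool" where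
  "comodule C H \<Delta> \<epsilon> Y \<delta> \<longleftrightarrow> Y \<in> Obj C \<and> \<delta> \<in> hom C Y (TnsO C Y H) \<and>
     Cmp C (TnsM C \<delta> (Idm C H)) \<delta> = Cmp C (TnsM C (Idm C Y) \<Delta>) \<delta> \<and>
     Cmp C (TnsM C (Idm C Y) \<epsilon>) \<delta> = Idm C Y"

definition comodule_hom :: "('o,'m,'x) smcat_scheme \<Rightarrow> 'o \<Rightarrow> 'o \<Rightarrow> 'm \<Rightarrow> 'o \<Rightarrow> 'm \<Rightarrow> 'm \<Rightarrow> bool" where
  "comodule_hom C H Y \<delta> Y' \<delta>' f \<longleftrightarrow> f \<in> hom C Y Y' \<and>
     Cmp C \<delta>' f = Cmp C (TnsM C f (Idm C H)) \<delta>"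

definition partial_comodule_datum ::
  "('o,'m,'x) smcat_scheme \<Rightarrow> 'o \<Rightarrow> 'o \<Rightarrow> 'o \<Rightarrow> 'm \<Rightarrow> 'm \<Rightarrow> bool" where
  "partial_comodule_datum C H X XH \<pi> \<rho> \<longleftrightarrow> X \<in> Obj C \<and> XH \<in> Obj C \<and>
     \<rho> \<in> hom C X XH \<and> \<pi> \<in> hom C (TnsO C X H) XH \<and> is_epi C \<pi>"

definition GP1 :: "('o,'m,'x) smcat_scheme \<Rightarrow> 'o \<Rightarrow> 'm \<Rightarrow> 'o \<Rightarrow> 'o \<Rightarrow> 'm \<Rightarrow> 'm \<Rightarrow> bool" where
  "GP1 C H \<epsilon> X XH \<pi> \<rho> \<longleftrightarrow> (\<exists>e \<in> hom C XH X.
      Cmp C e \<rho> = Idm C X \<and> Cmp C e \<pi> = TnsM C (Idm C X) \<epsilon>)"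

text \<open>GP2, with the three pushouts of the paper:
  \<open>XHH = (X\<bullet>H)\<bullet>H\<close> (coprojections \<open>\<rho>H = \<rho>\<bullet>H\<close>, \<open>\<pi>XH = \<pi>_{X\<bullet>H}\<close>),
  \<open>XHxH = X\<bullet>(H\<otimes>H)\<close> (coprojections \<open>XD = X\<bullet>\<Delta>\<close>, \<open>\<pi>XD = \<pi>_{X,\<Delta>}\<close>),
  \<open>XHbH = X\<bullet>(H\<bullet>H)\<close> (coprojections \<open>\<pi>'X\<close>, \<open>\<pi>'XD\<close>).
  Pushouts are unique up to unique isomorphism compatible with the coprojections,
  so the condition does not depend on which pushouts are chosen.\<close>
definition GP2 :: "('o,'m,'x) smcat_scheme \<Rightarrow> 'o \<Rightarrow> 'm \<Rightarrow> 'o \<Rightarrow> 'o \<Rightarrow> 'm \<Rightarrow> 'm \<Rightarrow> bool" where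
  "GP2 C H \<Delta> X XH \<pi> \<rho> \<longleftrightarrow>
    (\<exists>XHH \<rho>H \<pi>XH XHxH XD \<pi>XD XHbH \<pi>'X \<pi>'XD \<theta>.
       is_pushout C \<pi> (TnsM C \<rho> (Idm C H)) XHH \<rho>H \<pi>XH \<and>
       is_pushout C \<pi> (TnsM C (Idm C X) \<Delta>) XHxH XD \<pi>XD \<and>
       is_pushout C \<pi>XD (TnsM C \<pi> (Idm C H)) XHbH \<pi>'X \<pi>'XD \<and>
       \<theta> \<in> hom C XHbH XHH \<and> is_iso C \<theta> \<and>
       Cmp C \<theta> \<pi>'XD = \<pi>XH \<and>
       Cmp C \<rho>H \<rho> = Cmp C \<theta> (Cmp C \<pi>'X (Cmp C XD \<rho>)))"

definition geometric_partial_comodule ::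
  "('o,'m,'x) smcat_scheme \<Rightarrow> 'o \<Rightarrow> 'm \<Rightarrow> 'm \<Rightarrow> 'o \<Rightarrow> 'o \<Rightarrow> 'm \<Rightarrow> 'm \<Rightarrow> bool" where
  "geometric_partial_comodule C H \<Delta> \<epsilon> X XH \<pi> \<rho> \<longleftrightarrow>
     partial_comodule_datum C H X XH \<pi> \<rho> \<and> GP1 C H \<epsilon> X XH \<pi> \<rho> \<and> GP2 C H \<Delta> X XH \<pi> \<rho>"

text \<open>Morphisms \<open>(X,X\<bullet>H,\<pi>,\<rho>) \<rightarrow> (X',X'\<bullet>H,\<pi>',\<rho>')\<close> in \<open>PCom^H\<close> (given by the first component).\<close>
definition pcom_hom ::
  "('o,'m,'x) smcat_scheme \<Rightarrow> 'o \<Rightarrow> 'o \<Rightarrow> 'o \<Rightarrow> 'm \<Rightarrow> 'm \<Rightarrow> 'o \<Rightarrow> 'o \<Rightarrow> 'm \<Rightarrow> 'm \<Rightarrow> 'm \<Rightarrow> bool" where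
  "pcom_hom C H X XH \<pi> \<rho> X' X'H \<pi>' \<rho>' f \<longleftrightarrow> f \<in> hom C X X' \<and>
     (\<exists>fH \<in> hom C XH X'H. Cmp C \<rho>' f = Cmp C fH \<rho> \<and>
        Cmp C \<pi>' (TnsM C f (Idm C H)) = Cmp C fH \<pi>)"

text \<open>\<open>Hom_{PCom^H}(\<I>(Y), X)\<close> for a global comodule \<open>(Y,\<delta>)\<close>, with \<open>\<I>(Y) = (Y, Y\<otimes>H, id, \<delta>)\<close>.\<close>
definition pcom_hom_from_global ::
  "('o,'m,'x) smcat_scheme \<Rightarrow> 'o \<Rightarrow> 'o \<Rightarrow> 'm \<Rightarrow> 'o \<Rightarrow> 'o \<Rightarrow> 'm \<Rightarrow> 'm \<Rightarrow> 'm set" where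
  "pcom_hom_from_global C H Y \<delta> X XH \<pi> \<rho> =
     {g \<in> hom C Y X. Cmp C \<pi> (Cmp C (TnsM C g (Idm C H)) \<delta>) = Cmp C \<rho> g}"

definition equalizing_comodule_homs ::
  "('o,'m,'x) smcat_scheme \<Rightarrow> 'o \<Rightarrow> 'm \<Rightarrow> 'o \<Rightarrow> 'm \<Rightarrow> 'o \<Rightarrow> 'o \<Rightarrow> 'm \<Rightarrow> 'm \<Rightarrow> 'm set" where
  "equalizing_comodule_homs C H \<Delta> Y \<delta> X XH \<pi> \<rho> =
     {f. comodule_hom C H Y \<delta> (TnsO C X H) (TnsM C (Idm C X) \<Delta>) f \<and>
         Cmp C (TnsM C \<rho> (Idm C H)) f =
         Cmp C (TnsM C \<pi> (Idm C H)) (Cmp C (TnsM C (Idm C X) \<Delta>) f)}"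

end

theory Submission
  imports Defs
begin

(* The map g |-> (g (x) H) delta is the transpose of g under the adjunction between the forgetful
   functor from comodules and the cofree comodule functor - (x) H, with inverse f |-> (X (x) eps) f,
   and both maps are natural as transposition is.  Since (g (x) H) delta is a comodule map, tensoring
   the partial-comodule condition pi (g (x) H) delta = rho g with H yields the equalizing condition;
   conversely, applying XH (x) eps to the equalizing condition and using the counit law recovers
   pi f = rho (X (x) eps) f. *)

locale strict_monoidal =
  fixes C :: "('o,'m,'x) smcat_scheme"
  assumes strict_monoidal: "strict_monoidal_category C"
begin

abbreviation comp :: "'m \<Rightarrow> 'm \<Rightarrow> 'm" (infixr "\<cdot>" 55)
  where "g \<cdot> f \<equiv> Cmp C g f"

abbreviation tensor :: "'m \<Rightarrow> 'm \<Rightarrow> 'm" (infixr "\<otimes>" 60)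
  where "f \<otimes> g \<equiv> TnsM C f g"

abbreviation tensor_obj :: "'o \<Rightarrow> 'o \<Rightarrow> 'o" (infixr "\<otimes>\<^sub>o" 60)
  where "A \<otimes>\<^sub>o B \<equiv> TnsO C A B"

lemma category: "category C"
  using strict_monoidal unfolding strict_monoidal_category_def by blast

lemma hom_objs:
  assumes "f \<in> hom C A B" shows "A \<in> Obj C" "B \<in> Obj C"
  using assms category unfolding category_def hom_def by auto

lemma id_in_hom: "A \<in> Obj C \<Longrightarrow> Idm C A \<in> hom C A A"
  using category unfolding category_def by blast

lemma comp_in_hom: "f \<in> hom C A B \<Longrightarrow> g \<in> hom C B D \<Longrightarrow> g \<cdot> f \<in> hom C A D"
  using category unfolding category_def hom_def by auto

lemma comp_assoc:
  "f \<in> hom C A B \<Longrightarrow> g \<in> hom C B D \<Longrightarrow> h \<in> hom C D E \<Longrightarrow> h \<cdot> g \<cdot> f = (h \<cdot> g) \<cdot> f"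
  using category unfolding category_def hom_def by auto

lemma comp_id_left: "f \<in> hom C A B \<Longrightarrow> Idm C B \<cdot> f = f"
  using category unfolding category_def hom_def by auto

lemma comp_id_right: "f \<in> hom C A B \<Longrightarrow> f \<cdot> Idm C A = f"
  using category unfolding category_def hom_def by auto

lemma tensor_in_hom:
  "f \<in> hom C A B \<Longrightarrow> g \<in> hom C A' B' \<Longrightarrow> f \<otimes> g \<in> hom C (A \<otimes>\<^sub>o A') (B \<otimes>\<^sub>o B')"
  using strict_monoidal unfolding strict_monoidal_category_def hom_def by auto

lemma tensor_id: "A \<in> Obj C \<Longrightarrow> B \<in> Obj C \<Longrightarrow> Idm C A \<otimes> Idm C B = Idm C (A \<otimes>\<^sub>o B)"
  using strict_monoidal unfolding strict_monoidal_category_def by blast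

lemma interchange:
  "f \<in> hom C A B \<Longrightarrow> f' \<in> hom C B D \<Longrightarrow> g \<in> hom C A' B' \<Longrightarrow> g' \<in> hom C B' D' \<Longrightarrow>
   (f' \<cdot> f) \<otimes> (g' \<cdot> g) = (f' \<otimes> g') \<cdot> (f \<otimes> g)"
  using strict_monoidal unfolding strict_monoidal_category_def hom_def by auto

lemma tensor_assoc:
  "f \<in> Arr C \<Longrightarrow> g \<in> Arr C \<Longrightarrow> h \<in> Arr C \<Longrightarrow> (f \<otimes> g) \<otimes> h = f \<otimes> g \<otimes> h"
  using strict_monoidal unfolding strict_monoidal_category_def by blast

lemma tensor_obj_assoc:
  "A \<in> Obj C \<Longrightarrow> B \<in> Obj C \<Longrightarrow> D \<in> Obj C \<Longrightarrow> (A \<otimes>\<^sub>o B) \<otimes>\<^sub>o D = A \<otimes>\<^sub>o B \<otimes>\<^sub>o D"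
  using strict_monoidal unfolding strict_monoidal_category_def by blast

lemma tensor_obj_unit_left: "A \<in> Obj C \<Longrightarrow> Unt C \<otimes>\<^sub>o A = A"
  using strict_monoidal unfolding strict_monoidal_category_def by blast

lemma tensor_obj_unit_right: "A \<in> Obj C \<Longrightarrow> A \<otimes>\<^sub>o Unt C = A"
  using strict_monoidal unfolding strict_monoidal_category_def by blast

lemma tensor_unit_right: "f \<in> Arr C \<Longrightarrow> f \<otimes> Idm C (Unt C) = f"
  using strict_monoidal unfolding strict_monoidal_category_def by blast

lemma tensor_comp_id:
  assumes "f \<in> hom C A B" "f' \<in> hom C B D" "K \<in> Obj C"
  shows "(f' \<cdot> f) \<otimes> Idm C K = (f' \<otimes> Idm C K) \<cdot> (f \<otimes> Idm C K)"
  using interchange[OF assms(1,2) id_in_hom id_in_hom] comp_id_left[OF id_in_hom] assms(3) by simp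

lemma id_tensor_comp:
  assumes "K \<in> Obj C" "g \<in> hom C A B" "g' \<in> hom C B D"
  shows "Idm C K \<otimes> (g' \<cdot> g) = (Idm C K \<otimes> g') \<cdot> (Idm C K \<otimes> g)"
  using interchange[OF id_in_hom id_in_hom assms(2,3)] comp_id_left[OF id_in_hom] assms(1) by simp

lemma tensor_slide:
  assumes f: "f \<in> hom C A B" and d: "d \<in> hom C H K"
  shows "(Idm C B \<otimes> d) \<cdot> (f \<otimes> Idm C H) = (f \<otimes> Idm C K) \<cdot> (Idm C A \<otimes> d)"
proof -
  have "(Idm C B \<otimes> d) \<cdot> (f \<otimes> Idm C H) = f \<otimes> d"
    using interchange[OF f id_in_hom id_in_hom d] hom_objs f d comp_id_left comp_id_right by metis
  also have "\<dots> = (f \<otimes> Idm C K) \<cdot> (Idm C A \<otimes> d)"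
    using interchange[OF id_in_hom f d id_in_hom] hom_objs f d comp_id_left comp_id_right by metis
  finally show ?thesis .
qed

lemma id_tensor_to_unit_in_hom:
  assumes "A \<in> Obj C" "e \<in> hom C H (Unt C)"
  shows "Idm C A \<otimes> e \<in> hom C (A \<otimes>\<^sub>o H) A"
  using tensor_in_hom[OF id_in_hom[OF assms(1)] assms(2)] tensor_obj_unit_right[OF assms(1)] by simp

lemma counit_slide:
  assumes "f \<in> hom C A B" "e \<in> hom C H (Unt C)"
  shows "(Idm C B \<otimes> e) \<cdot> (f \<otimes> Idm C H) = f \<cdot> (Idm C A \<otimes> e)"
  using tensor_slide[OF assms] tensor_unit_right assms(1) by (simp add: hom_def)

lemma cofree_transpose_natural_source:
  assumes H: "H \<in> Obj C" and \<delta>: "\<delta> \<in> hom C Y (Y \<otimes>\<^sub>o H)" and \<delta>': "\<delta>' \<in> hom C Y' (Y' \<otimes>\<^sub>o H)"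
    and h: "comodule_hom C H Y' \<delta>' Y \<delta> h" and g: "g \<in> hom C Y X"
  shows "((g \<cdot> h) \<otimes> Idm C H) \<cdot> \<delta>' = ((g \<otimes> Idm C H) \<cdot> \<delta>) \<cdot> h"
proof -
  from h have h_hom: "h \<in> hom C Y' Y" and h_co: "\<delta> \<cdot> h = (h \<otimes> Idm C H) \<cdot> \<delta>'"
    unfolding comodule_hom_def by auto
  have gH: "g \<otimes> Idm C H \<in> hom C (Y \<otimes>\<^sub>o H) (X \<otimes>\<^sub>o H)"
    using tensor_in_hom[OF g id_in_hom[OF H]] .
  have hH: "h \<otimes> Idm C H \<in> hom C (Y' \<otimes>\<^sub>o H) (Y \<otimes>\<^sub>o H)"
    using tensor_in_hom[OF h_hom id_in_hom[OF H]] .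
  show ?thesis
    using tensor_comp_id[OF h_hom g H] comp_assoc[OF \<delta>' hH gH] h_co[symmetric]
      comp_assoc[OF h_hom \<delta> gH] by simp
qed

lemma cofree_transpose_natural_target:
  assumes H: "H \<in> Obj C" and \<delta>: "\<delta> \<in> hom C D (Y \<otimes>\<^sub>o H)" and g: "g \<in> hom C Y X"
    and k: "k \<in> hom C X X'"
  shows "((k \<cdot> g) \<otimes> Idm C H) \<cdot> \<delta> = (k \<otimes> Idm C H) \<cdot> (g \<otimes> Idm C H) \<cdot> \<delta>"
  using tensor_comp_id[OF g k H] comp_assoc[OF \<delta> tensor_in_hom[OF g id_in_hom[OF H]]
      tensor_in_hom[OF k id_in_hom[OF H]]] by simp

lemma counit_natural:
  assumes e: "e \<in> hom C H (Unt C)" and f: "f \<in> hom C Y (X \<otimes>\<^sub>o H)" and k: "k \<in> hom C X X'"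
  shows "(Idm C X' \<otimes> e) \<cdot> (k \<otimes> Idm C H) \<cdot> f = k \<cdot> (Idm C X \<otimes> e) \<cdot> f"
proof -
  have H: "H \<in> Obj C" using hom_objs[OF e] by simp
  have "(Idm C X' \<otimes> e) \<cdot> (k \<otimes> Idm C H) \<cdot> f = ((Idm C X' \<otimes> e) \<cdot> (k \<otimes> Idm C H)) \<cdot> f"
    using comp_assoc[OF f tensor_in_hom[OF k id_in_hom[OF H]] id_tensor_to_unit_in_hom[OF _ e]]
      hom_objs[OF k] by simp
  also have "\<dots> = k \<cdot> (Idm C X \<otimes> e) \<cdot> f"
    using counit_slide[OF k e] comp_assoc[OF f id_tensor_to_unit_in_hom[OF _ e] k] hom_objs[OF k] by simp
  finally show ?thesis .
qed

end

locale coalgebra_in = strict_monoidal +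
  fixes H \<Delta> \<epsilon>
  assumes coalgebra: "coalgebra C H \<Delta> \<epsilon>"
begin

lemma H_obj: "H \<in> Obj C"
  and comult_in_hom: "\<Delta> \<in> hom C H (H \<otimes>\<^sub>o H)"
  and counit_in_hom: "\<epsilon> \<in> hom C H (Unt C)"
  and counit_left: "(\<epsilon> \<otimes> Idm C H) \<cdot> \<Delta> = Idm C H"
  and counit_right: "(Idm C H \<otimes> \<epsilon>) \<cdot> \<Delta> = Idm C H"
  using coalgebra unfolding coalgebra_def by auto

lemma comodule_facts:
  assumes "comodule C H \<Delta> \<epsilon> Y \<delta>"
  shows "Y \<in> Obj C" "\<delta> \<in> hom C Y (Y \<otimes>\<^sub>o H)"
    "(\<delta> \<otimes> Idm C H) \<cdot> \<delta> = (Idm C Y \<otimes> \<Delta>) \<cdot> \<delta>"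
    "(Idm C Y \<otimes> \<epsilon>) \<cdot> \<delta> = Idm C Y"
  using assms unfolding comodule_def by auto

lemma id_tensor_counit_in_hom: "X \<in> Obj C \<Longrightarrow> Idm C X \<otimes> \<epsilon> \<in> hom C (X \<otimes>\<^sub>o H) X"
  by (rule id_tensor_to_unit_in_hom[OF _ counit_in_hom])

lemma id_tensor_counit_left:
  assumes X: "X \<in> Obj C"
  shows "((Idm C X \<otimes> \<epsilon>) \<otimes> Idm C H) \<cdot> (Idm C X \<otimes> \<Delta>) = Idm C (X \<otimes>\<^sub>o H)"
proof -
  have "((Idm C X \<otimes> \<epsilon>) \<otimes> Idm C H) \<cdot> (Idm C X \<otimes> \<Delta>) = Idm C X \<otimes> ((\<epsilon> \<otimes> Idm C H) \<cdot> \<Delta>)"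
    using tensor_assoc id_tensor_comp[OF X comult_in_hom] tensor_in_hom[OF counit_in_hom id_in_hom[OF H_obj]]
      tensor_obj_unit_left[OF H_obj] id_in_hom[OF X] counit_in_hom id_in_hom[OF H_obj]
    by (simp add: hom_def)
  then show ?thesis
    using counit_left tensor_id[OF X H_obj] by simp
qed

lemma id_tensor_counit_right:
  assumes X: "X \<in> Obj C"
  shows "(Idm C (X \<otimes>\<^sub>o H) \<otimes> \<epsilon>) \<cdot> (Idm C X \<otimes> \<Delta>) = Idm C (X \<otimes>\<^sub>o H)"
proof -
  have "(Idm C (X \<otimes>\<^sub>o H) \<otimes> \<epsilon>) \<cdot> (Idm C X \<otimes> \<Delta>) = Idm C X \<otimes> ((Idm C H \<otimes> \<epsilon>) \<cdot> \<Delta>)"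
  proof -
    have "Idm C (X \<otimes>\<^sub>o H) \<otimes> \<epsilon> = Idm C X \<otimes> (Idm C H \<otimes> \<epsilon>)"
      using tensor_assoc[of "Idm C X" "Idm C H" \<epsilon>] tensor_id[OF X H_obj]
        id_in_hom[OF X] id_in_hom[OF H_obj] counit_in_hom by (simp add: hom_def)
    then show ?thesis
      using id_tensor_comp[OF X comult_in_hom id_tensor_counit_in_hom[OF H_obj]] by simp
  qed
  then show ?thesis
    using counit_right tensor_id[OF X H_obj] by simp
qed

lemma cofree_transpose_comodule_hom:
  assumes Y: "comodule C H \<Delta> \<epsilon> Y \<delta>" and g: "g \<in> hom C Y X"
  shows "comodule_hom C H Y \<delta> (X \<otimes>\<^sub>o H) (Idm C X \<otimes> \<Delta>) ((g \<otimes> Idm C H) \<cdot> \<delta>)"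
proof -
  note \<delta> = comodule_facts[OF Y]
  have objs: "X \<in> Obj C" "H \<otimes>\<^sub>o H \<in> Obj C"
    using hom_objs[OF g] hom_objs[OF comult_in_hom] by auto
  have gH: "g \<otimes> Idm C H \<in> hom C (Y \<otimes>\<^sub>o H) (X \<otimes>\<^sub>o H)"
    using tensor_in_hom[OF g id_in_hom[OF H_obj]] .
  have gHH: "g \<otimes> Idm C (H \<otimes>\<^sub>o H) \<in> hom C (Y \<otimes>\<^sub>o H \<otimes>\<^sub>o H) (X \<otimes>\<^sub>o H \<otimes>\<^sub>o H)"
    using tensor_in_hom[OF g id_in_hom[OF objs(2)]] .
  have YD: "Idm C Y \<otimes> \<Delta> \<in> hom C (Y \<otimes>\<^sub>o H) (Y \<otimes>\<^sub>o H \<otimes>\<^sub>o H)"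
    using tensor_in_hom[OF id_in_hom[OF \<delta>(1)] comult_in_hom] .
  have \<delta>H: "\<delta> \<otimes> Idm C H \<in> hom C (Y \<otimes>\<^sub>o H) (Y \<otimes>\<^sub>o H \<otimes>\<^sub>o H)"
    using tensor_in_hom[OF \<delta>(2) id_in_hom[OF H_obj]] tensor_obj_assoc \<delta>(1) H_obj by simp
  have gH_H: "(g \<otimes> Idm C H) \<otimes> Idm C H = g \<otimes> Idm C (H \<otimes>\<^sub>o H)"
    using tensor_assoc tensor_id[OF H_obj H_obj] g id_in_hom[OF H_obj] by (simp add: hom_def)
  have "(Idm C X \<otimes> \<Delta>) \<cdot> (g \<otimes> Idm C H) \<cdot> \<delta> = (g \<otimes> Idm C (H \<otimes>\<^sub>o H)) \<cdot> (Idm C Y \<otimes> \<Delta>) \<cdot> \<delta>"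
    using tensor_slide[OF g comult_in_hom]
      comp_assoc[OF \<delta>(2) gH tensor_in_hom[OF id_in_hom[OF objs(1)] comult_in_hom]]
      comp_assoc[OF \<delta>(2) YD gHH] by simp
  also have "\<dots> = (g \<otimes> Idm C (H \<otimes>\<^sub>o H)) \<cdot> (\<delta> \<otimes> Idm C H) \<cdot> \<delta>"
    using \<delta>(3) by simp
  also have "\<dots> = (((g \<otimes> Idm C H) \<cdot> \<delta>) \<otimes> Idm C H) \<cdot> \<delta>"
    using tensor_comp_id[OF \<delta>(2) gH H_obj] gH_H comp_assoc[OF \<delta>(2) \<delta>H gHH] by simp
  finally show ?thesis
    unfolding comodule_hom_def using comp_in_hom[OF \<delta>(2) gH] by simp
qed

lemma counit_cofree_transpose:
  assumes Y: "comodule C H \<Delta> \<epsilon> Y \<delta>" and g: "g \<in> hom C Y X"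
  shows "(Idm C X \<otimes> \<epsilon>) \<cdot> (g \<otimes> Idm C H) \<cdot> \<delta> = g"
proof -
  note \<delta> = comodule_facts[OF Y]
  have "(Idm C X \<otimes> \<epsilon>) \<cdot> (g \<otimes> Idm C H) \<cdot> \<delta> = g \<cdot> (Idm C Y \<otimes> \<epsilon>) \<cdot> \<delta>"
    using counit_slide[OF g counit_in_hom] comp_assoc[OF \<delta>(2) tensor_in_hom[OF g id_in_hom[OF H_obj]]
        id_tensor_counit_in_hom[OF hom_objs(2)[OF g]]]
      comp_assoc[OF \<delta>(2) id_tensor_counit_in_hom[OF \<delta>(1)] g] by simp
  then show ?thesis
    using \<delta>(4) comp_id_right[OF g] by simp
qed

lemma cofree_transpose_counit:
  assumes Y: "comodule C H \<Delta> \<epsilon> Y \<delta>" and X: "X \<in> Obj C"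
    and f: "comodule_hom C H Y \<delta> (X \<otimes>\<^sub>o H) (Idm C X \<otimes> \<Delta>) f"
  shows "(((Idm C X \<otimes> \<epsilon>) \<cdot> f) \<otimes> Idm C H) \<cdot> \<delta> = f"
proof -
  note \<delta> = comodule_facts[OF Y]
  from f have f_hom: "f \<in> hom C Y (X \<otimes>\<^sub>o H)"
    and f_co: "(Idm C X \<otimes> \<Delta>) \<cdot> f = (f \<otimes> Idm C H) \<cdot> \<delta>"
    unfolding comodule_hom_def by auto
  have Xe: "Idm C X \<otimes> \<epsilon> \<in> hom C (X \<otimes>\<^sub>o H) X"
    using id_tensor_counit_in_hom[OF X] .
  have XeH: "(Idm C X \<otimes> \<epsilon>) \<otimes> Idm C H \<in> hom C (X \<otimes>\<^sub>o H \<otimes>\<^sub>o H) (X \<otimes>\<^sub>o H)"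
    using tensor_in_hom[OF Xe id_in_hom[OF H_obj]] tensor_obj_assoc[OF X H_obj H_obj] by simp
  have fH: "f \<otimes> Idm C H \<in> hom C (Y \<otimes>\<^sub>o H) (X \<otimes>\<^sub>o H \<otimes>\<^sub>o H)"
    using tensor_in_hom[OF f_hom id_in_hom[OF H_obj]] tensor_obj_assoc[OF X H_obj H_obj] by simp
  have XD: "Idm C X \<otimes> \<Delta> \<in> hom C (X \<otimes>\<^sub>o H) (X \<otimes>\<^sub>o H \<otimes>\<^sub>o H)"
    using tensor_in_hom[OF id_in_hom[OF X] comult_in_hom] .
  have "(((Idm C X \<otimes> \<epsilon>) \<cdot> f) \<otimes> Idm C H) \<cdot> \<delta> = ((Idm C X \<otimes> \<epsilon>) \<otimes> Idm C H) \<cdot> (f \<otimes> Idm C H) \<cdot> \<delta>"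
    using tensor_comp_id[OF f_hom Xe H_obj] comp_assoc[OF \<delta>(2) fH XeH] by simp
  also have "\<dots> = ((Idm C X \<otimes> \<epsilon>) \<otimes> Idm C H) \<cdot> (Idm C X \<otimes> \<Delta>) \<cdot> f"
    using f_co by simp
  also have "\<dots> = f"
    using comp_assoc[OF f_hom XD XeH] id_tensor_counit_left[OF X] comp_id_left[OF f_hom] by simp
  finally show ?thesis .
qed

lemma cofree_transpose_equalizes:
  assumes Y: "comodule C H \<Delta> \<epsilon> Y \<delta>" and g: "g \<in> hom C Y X"
    and \<pi>: "\<pi> \<in> hom C (X \<otimes>\<^sub>o H) XH" and \<rho>: "\<rho> \<in> hom C X XH"
    and g_pcom: "\<pi> \<cdot> (g \<otimes> Idm C H) \<cdot> \<delta> = \<rho> \<cdot> g"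
  shows "(\<rho> \<otimes> Idm C H) \<cdot> (g \<otimes> Idm C H) \<cdot> \<delta> =
    (\<pi> \<otimes> Idm C H) \<cdot> (Idm C X \<otimes> \<Delta>) \<cdot> (g \<otimes> Idm C H) \<cdot> \<delta>"
proof -
  note \<delta> = comodule_facts[OF Y]
  define f where "f = (g \<otimes> Idm C H) \<cdot> \<delta>"
  have gH: "g \<otimes> Idm C H \<in> hom C (Y \<otimes>\<^sub>o H) (X \<otimes>\<^sub>o H)"
    using tensor_in_hom[OF g id_in_hom[OF H_obj]] .
  have f_hom: "f \<in> hom C Y (X \<otimes>\<^sub>o H)"
    unfolding f_def using comp_in_hom[OF \<delta>(2) gH] .
  have f_co: "(Idm C X \<otimes> \<Delta>) \<cdot> f = (f \<otimes> Idm C H) \<cdot> \<delta>"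
    using cofree_transpose_comodule_hom[OF Y g] unfolding f_def comodule_hom_def by simp
  have "(\<pi> \<otimes> Idm C H) \<cdot> (Idm C X \<otimes> \<Delta>) \<cdot> f = ((\<pi> \<cdot> f) \<otimes> Idm C H) \<cdot> \<delta>"
    using f_co tensor_comp_id[OF f_hom \<pi> H_obj]
      comp_assoc[OF \<delta>(2) tensor_in_hom[OF f_hom id_in_hom[OF H_obj]] tensor_in_hom[OF \<pi> id_in_hom[OF H_obj]]]
    by simp
  also have "\<dots> = (\<rho> \<otimes> Idm C H) \<cdot> f"
    using g_pcom tensor_comp_id[OF g \<rho> H_obj] comp_assoc[OF \<delta>(2) gH tensor_in_hom[OF \<rho> id_in_hom[OF H_obj]]]
    unfolding f_def by simp
  finally show ?thesis
    unfolding f_def by simp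
qed

lemma equalizing_imp_counit_pcom:
  assumes f: "f \<in> hom C Y (X \<otimes>\<^sub>o H)"
    and \<pi>: "\<pi> \<in> hom C (X \<otimes>\<^sub>o H) XH" and \<rho>: "\<rho> \<in> hom C X XH"
    and f_eq: "(\<rho> \<otimes> Idm C H) \<cdot> f = (\<pi> \<otimes> Idm C H) \<cdot> (Idm C X \<otimes> \<Delta>) \<cdot> f"
  shows "\<pi> \<cdot> f = \<rho> \<cdot> (Idm C X \<otimes> \<epsilon>) \<cdot> f"
proof -
  have X: "X \<in> Obj C" and XH: "XH \<in> Obj C"
    using hom_objs[OF \<rho>] by auto
  have XD: "Idm C X \<otimes> \<Delta> \<in> hom C (X \<otimes>\<^sub>o H) ((X \<otimes>\<^sub>o H) \<otimes>\<^sub>o H)"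
    using tensor_in_hom[OF id_in_hom[OF X] comult_in_hom] tensor_obj_assoc[OF X H_obj H_obj] by simp
  note XHe = id_tensor_counit_in_hom[OF XH]
  note XHHe = id_tensor_counit_in_hom[OF hom_objs(1)[OF \<pi>]]
  have "\<rho> \<cdot> (Idm C X \<otimes> \<epsilon>) \<cdot> f = (Idm C XH \<otimes> \<epsilon>) \<cdot> (\<rho> \<otimes> Idm C H) \<cdot> f"
    using counit_natural[OF counit_in_hom f \<rho>] by simp
  also have "\<dots> = (Idm C XH \<otimes> \<epsilon>) \<cdot> (\<pi> \<otimes> Idm C H) \<cdot> (Idm C X \<otimes> \<Delta>) \<cdot> f"
    using f_eq by simp
  also have "\<dots> = \<pi> \<cdot> (Idm C (X \<otimes>\<^sub>o H) \<otimes> \<epsilon>) \<cdot> (Idm C X \<otimes> \<Delta>) \<cdot> f"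
    using counit_natural[OF counit_in_hom comp_in_hom[OF f XD] \<pi>] by simp
  also have "\<dots> = \<pi> \<cdot> f"
    using comp_assoc[OF f XD XHHe] id_tensor_counit_right[OF X] comp_id_left[OF f] by simp
  finally show ?thesis ..
qed

lemma cofree_transpose_in_equalizing_comodule_homs:
  assumes Y: "comodule C H \<Delta> \<epsilon> Y \<delta>"
    and \<pi>: "\<pi> \<in> hom C (X \<otimes>\<^sub>o H) XH" and \<rho>: "\<rho> \<in> hom C X XH"
    and g: "g \<in> pcom_hom_from_global C H Y \<delta> X XH \<pi> \<rho>"
  shows "(g \<otimes> Idm C H) \<cdot> \<delta> \<in> equalizing_comodule_homs C H \<Delta> Y \<delta> X XH \<pi> \<rho>"
  using g cofree_transpose_comodule_hom[OF Y] cofree_transpose_equalizes[OF Y _ \<pi> \<rho>]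
  unfolding pcom_hom_from_global_def equalizing_comodule_homs_def by auto

lemma counit_comp_in_pcom_hom_from_global:
  assumes Y: "comodule C H \<Delta> \<epsilon> Y \<delta>"
    and \<pi>: "\<pi> \<in> hom C (X \<otimes>\<^sub>o H) XH" and \<rho>: "\<rho> \<in> hom C X XH"
    and f: "f \<in> equalizing_comodule_homs C H \<Delta> Y \<delta> X XH \<pi> \<rho>"
  shows "(Idm C X \<otimes> \<epsilon>) \<cdot> f \<in> pcom_hom_from_global C H Y \<delta> X XH \<pi> \<rho>"
proof -
  have X: "X \<in> Obj C" using hom_objs[OF \<rho>] by simp
  from f have f_hom: "f \<in> hom C Y (X \<otimes>\<^sub>o H)"
    and f_co: "comodule_hom C H Y \<delta> (X \<otimes>\<^sub>o H) (Idm C X \<otimes> \<Delta>) f"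
    and f_eq: "(\<rho> \<otimes> Idm C H) \<cdot> f = (\<pi> \<otimes> Idm C H) \<cdot> (Idm C X \<otimes> \<Delta>) \<cdot> f"
    unfolding equalizing_comodule_homs_def comodule_hom_def by auto
  show ?thesis
    using comp_in_hom[OF f_hom id_tensor_counit_in_hom[OF X]] cofree_transpose_counit[OF Y X f_co]
      equalizing_imp_counit_pcom[OF f_hom \<pi> \<rho> f_eq]
    unfolding pcom_hom_from_global_def by simp
qed

end

theorem lemma3p3:
  fixes C :: "('o,'m,'x) smcat_scheme"
  assumes smc: "strict_monoidal_category C"
    and po: "has_pushouts C"
    and coalg: "coalgebra C H \<Delta> \<epsilon>"
    and gpc: "geometric_partial_comodule C H \<Delta> \<epsilon> X XH \<pi> \<rho>"
    and com: "comodule C H \<Delta> \<epsilon> Y \<delta>"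
  shows
    \<comment> \<open>mutually inverse bijections\<close>
    "(\<forall>g \<in> pcom_hom_from_global C H Y \<delta> X XH \<pi> \<rho>.
        Cmp C (TnsM C g (Idm C H)) \<delta> \<in> equalizing_comodule_homs C H \<Delta> Y \<delta> X XH \<pi> \<rho> \<and>
        Cmp C (TnsM C (Idm C X) \<epsilon>) (Cmp C (TnsM C g (Idm C H)) \<delta>) = g)
   \<and> (\<forall>f \<in> equalizing_comodule_homs C H \<Delta> Y \<delta> X XH \<pi> \<rho>.
        Cmp C (TnsM C (Idm C X) \<epsilon>) f \<in> pcom_hom_from_global C H Y \<delta> X XH \<pi> \<rho> \<and>
        Cmp C (TnsM C (Cmp C (TnsM C (Idm C X) \<epsilon>) f) (Idm C H)) \<delta> = f)
   \<comment> \<open>naturality in Y\<close>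
   \<and> (\<forall>Y' \<delta>' h. comodule C H \<Delta> \<epsilon> Y' \<delta>' \<longrightarrow> comodule_hom C H Y' \<delta>' Y \<delta> h \<longrightarrow>
        (\<forall>g \<in> pcom_hom_from_global C H Y \<delta> X XH \<pi> \<rho>.
           Cmp C (TnsM C (Cmp C g h) (Idm C H)) \<delta>' = Cmp C (Cmp C (TnsM C g (Idm C H)) \<delta>) h) \<and>
        (\<forall>f \<in> equalizing_comodule_homs C H \<Delta> Y \<delta> X XH \<pi> \<rho>.
           Cmp C (TnsM C (Idm C X) \<epsilon>) (Cmp C f h) = Cmp C (Cmp C (TnsM C (Idm C X) \<epsilon>) f) h))
   \<comment> \<open>naturality in X\<close>
   \<and> (\<forall>X' X'H \<pi>' \<rho>' k. geometric_partial_comodule C H \<Delta> \<epsilon> X' X'H \<pi>' \<rho>' \<longrightarrow>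
        pcom_hom C H X XH \<pi> \<rho> X' X'H \<pi>' \<rho>' k \<longrightarrow>
        (\<forall>g \<in> pcom_hom_from_global C H Y \<delta> X XH \<pi> \<rho>.
           Cmp C (TnsM C (Cmp C k g) (Idm C H)) \<delta> =
           Cmp C (TnsM C k (Idm C H)) (Cmp C (TnsM C g (Idm C H)) \<delta>)) \<and>
        (\<forall>f \<in> equalizing_comodule_homs C H \<Delta> Y \<delta> X XH \<pi> \<rho>.
           Cmp C (TnsM C (Idm C X') \<epsilon>) (Cmp C (TnsM C k (Idm C H)) f) =
           Cmp C k (Cmp C (TnsM C (Idm C X) \<epsilon>) f)))"
proof -
  interpret coalgebra_in C H \<Delta> \<epsilon>
    using smc coalg by (simp add: coalgebra_in_def coalgebra_in_axioms_def strict_monoidal_def)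
  from gpc have X: "X \<in> Obj C" and \<pi>: "\<pi> \<in> hom C (X \<otimes>\<^sub>o H) XH" and \<rho>: "\<rho> \<in> hom C X XH"
    unfolding geometric_partial_comodule_def partial_comodule_datum_def by auto
  note \<delta>_hom = comodule_facts(2)[OF com]
  have g_hom: "g \<in> hom C Y X" if "g \<in> pcom_hom_from_global C H Y \<delta> X XH \<pi> \<rho>" for g
    using that unfolding pcom_hom_from_global_def by simp
  have f_hom: "f \<in> hom C Y (X \<otimes>\<^sub>o H)" if "f \<in> equalizing_comodule_homs C H \<Delta> Y \<delta> X XH \<pi> \<rho>" for f
    using that unfolding equalizing_comodule_homs_def comodule_hom_def by simp
  show ?thesis
    using cofree_transpose_in_equalizing_comodule_homs[OF com \<pi> \<rho>] counit_cofree_transpose[OF com g_hom]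
      counit_comp_in_pcom_hom_from_global[OF com \<pi> \<rho>] cofree_transpose_counit[OF com X]
      cofree_transpose_natural_source[OF H_obj \<delta>_hom comodule_facts(2) _ g_hom]
      comp_assoc[OF _ f_hom id_tensor_counit_in_hom[OF X]]
      cofree_transpose_natural_target[OF H_obj \<delta>_hom g_hom] counit_natural[OF counit_in_hom f_hom]
    by (auto simp: equalizing_comodule_homs_def comodule_hom_def pcom_hom_def)
qed

end
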